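(* Let $a,b\ge1$, $P=[a]\times[b]$, $n=a+b$. For every $f\in(\mathbb R^+)^P$, if $Q(f)=(q_1,q_2,\dots,q_n)$ then $Q(\pi_{\mathcal B}f)=(q_2,q_3,\dots,q_n,q_1)$.
   Context: $[a]\times[b]=\{(i,j)\in\mathbb Z^2:1\le i\le a,\ 1\le j\le b\}$ with the product order. Let $\widehat P=P\cup\{\hat0,\hat1\}$ with $\hat0<x<\hat1$ for all $x\in P$; write $y\lessdot x$ for covering relations; $x^+=\{y\in\widehat P:y\gtrdot x\}$, $x^-=\{y\in\widehat P:y\lessdot x\}$. Each $f:P\to\mathbb R^+$ is extended by $\hat f(\hat0)=\hat f(\hat1)=1$. Parallel sum: $s_1\parallel\cdots\parallel s_m=(1/s_1+\cdots+1/s_m)^{-1}$. The birational toggle $\tau_x$ changes only the value at $x$: $(\tau_xf)(x)=\frac{1}{f(x)}\bigl(\sum_{y\in x^-}\hat f(y)\bigr)\bigl(\|_{y\in x^+}\hat f(y)\bigr)$. The $k$-th file ($1\le k\le n-1$) is $\{(i,j)\in P:j-i+a=k\}$; $\tau^*_k$ is the composition of the toggles over file $k$; birational promotion is $\pi_{\mathcal B}=\tau^*_{n-1}\circ\cdots\circ\tau^*_1$. For $f\in(\mathbb R^+)^P$ let $p_k=\prod_{x\in\text{file }k}f(x)$ for $1\le k\le n-1$, $p_0=p_n=1$, $q_k=p_k/p_{k-1}$ for $1\le k\le n$; $Q(f)=(q_1,\dots,q_n)$. *)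

theory Defs
  imports Complex_Main
begin

definition grid :: "nat \<Rightarrow> nat \<Rightarrow> (nat \<times> nat) set" where
  "grid a b = {(i, j). 1 \<le> i \<and> i \<le> a \<and> 1 \<le> j \<and> j \<le> b}"

definition pleq :: "nat \<times> nat \<Rightarrow> nat \<times> nat \<Rightarrow> bool" where
  "pleq x y \<longleftrightarrow> fst x \<le> fst y \<and> snd x \<le> snd y"

datatype 'a hat = Bot | Top | El 'a

definition hatP :: "(nat \<times> nat) set \<Rightarrow> (nat \<times> nat) hat set" where
  "hatP P = {Bot, Top} \<union> El ` P"

fun hle :: "(nat \<times> nat) hat \<Rightarrow> (nat \<times> nat) hat \<Rightarrow> bool" where
  "hle Bot _ = True"
| "hle _ Top = True"
| "hle (El x) (El y) = pleq x y"
| "hle _ _ = False"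

definition hless :: "(nat \<times> nat) hat \<Rightarrow> (nat \<times> nat) hat \<Rightarrow> bool" where
  "hless x y \<longleftrightarrow> hle x y \<and> x \<noteq> y"

definition covers :: "(nat \<times> nat) set \<Rightarrow> (nat \<times> nat) hat \<Rightarrow> (nat \<times> nat) hat \<Rightarrow> bool" where
  "covers P y x \<longleftrightarrow> y \<in> hatP P \<and> x \<in> hatP P \<and> hless y x \<and>
     \<not> (\<exists>z \<in> hatP P. hless y z \<and> hless z x)"

definition up_covers :: "(nat \<times> nat) set \<Rightarrow> (nat \<times> nat) hat \<Rightarrow> (nat \<times> nat) hat set" where
  "up_covers P x = {y. covers P x y}"

definition down_covers :: "(nat \<times> nat) set \<Rightarrow> (nat \<times> nat) hat \<Rightarrow> (nat \<times> nat) hat set" where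
  "down_covers P x = {y. covers P y x}"

fun hatf :: "(nat \<times> nat \<Rightarrow> real) \<Rightarrow> (nat \<times> nat) hat \<Rightarrow> real" where
  "hatf f Bot = 1"
| "hatf f Top = 1"
| "hatf f (El x) = f x"

definition par_sum :: "('b \<Rightarrow> real) \<Rightarrow> 'b set \<Rightarrow> real" where
  "par_sum g S = 1 / (\<Sum>y\<in>S. 1 / g y)"

definition btoggle :: "(nat \<times> nat) set \<Rightarrow> nat \<times> nat \<Rightarrow> (nat \<times> nat \<Rightarrow> real) \<Rightarrow> (nat \<times> nat \<Rightarrow> real)" where
  "btoggle P x f = f(x := (1 / f x) * (\<Sum>y\<in>down_covers P (El x). hatf f y)
                                  * par_sum (hatf f) (up_covers P (El x)))"

definition gfile :: "nat \<Rightarrow> nat \<Rightarrow> nat \<Rightarrow> (nat \<times> nat) set" where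
  "gfile a b k = {(i, j) \<in> grid a b. int j - int i + int a = int k}"

(* \<tau>*_k: composition of the toggles over file k (they commute; we toggle in increasing row index i; the element
   of file k in row i is (i, k + i - a)) *)
definition toggle_file :: "nat \<Rightarrow> nat \<Rightarrow> nat \<Rightarrow> (nat \<times> nat \<Rightarrow> real) \<Rightarrow> (nat \<times> nat \<Rightarrow> real)" where
  "toggle_file a b k f = fold (\<lambda>i. btoggle (grid a b) (i, nat (int k + int i - int a)))
     (filter (\<lambda>i. (i, nat (int k + int i - int a)) \<in> gfile a b k) [1..<a + 1]) f"

definition bpro :: "nat \<Rightarrow> nat \<Rightarrow> (nat \<times> nat \<Rightarrow> real) \<Rightarrow> (nat \<times> nat \<Rightarrow> real)" where
  "bpro a b f = fold (toggle_file a b) [1..<a + b] f"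

definition pfile :: "nat \<Rightarrow> nat \<Rightarrow> (nat \<times> nat \<Rightarrow> real) \<Rightarrow> nat \<Rightarrow> real" where
  "pfile a b f k = (if k = 0 \<or> k = a + b then 1 else \<Prod>x\<in>gfile a b k. f x)"

definition qfile :: "nat \<Rightarrow> nat \<Rightarrow> (nat \<times> nat \<Rightarrow> real) \<Rightarrow> nat \<Rightarrow> real" where
  "qfile a b f k = pfile a b f k / pfile a b f (k - 1)"

definition Qvec :: "nat \<Rightarrow> nat \<Rightarrow> (nat \<times> nat \<Rightarrow> real) \<Rightarrow> real list" where
  "Qvec a b f = map (qfile a b f) [1..<a + b + 1]"

end

theory Submission
  imports Defs
begin

text \<open>Toggling file \<open>k\<close> replaces each value \<open>f x\<close> there by \<open>D x * U x / f x\<close>, where \<open>D x\<close> is the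
  sum over the lower covers and \<open>U x\<close> the parallel sum over the upper covers. Going along file \<open>k\<close>
  row by row, \<open>D\<close> at \<open>(i + 1, j + 1)\<close> times \<open>U\<close> at \<open>(i, j)\<close> is the sum times the parallel sum of
  \<open>f (i + 1, j)\<close> and \<open>f (i, j + 1)\<close>, i.e. their product; so the product of \<open>D * U\<close> over file \<open>k\<close>
  telescopes to \<open>p\<^sub>k\<^sub>-\<^sub>1 * p\<^sub>k\<^sub>+\<^sub>1\<close>, and toggling file \<open>k\<close> turns \<open>p\<^sub>k\<close> into
  \<open>p\<^sub>k\<^sub>-\<^sub>1 * p\<^sub>k\<^sub>+\<^sub>1 / p\<^sub>k\<close>. Promotion toggles the files in the order \<open>1, \<dots>, n - 1\<close>, so file \<open>k - 1\<close>
  has already been toggled and file \<open>k + 1\<close> not yet; by induction the new \<open>p\<^sub>k\<close> is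
  \<open>p\<^sub>k\<^sub>+\<^sub>1 / p\<^sub>1\<close>, which is exactly the cyclic shift of \<open>Q\<close>.\<close>

lemma hless_simps [simp]:
  "hless Bot (El x)" "hless Bot Top" "\<not> hless w Bot" "\<not> hless Top w" "hless (El x) Top"
  "hless (El x) (El y) \<longleftrightarrow> pleq x y \<and> x \<noteq> y"
  by (cases w; simp add: hless_def)+

lemma in_hatP_iff [simp]: "Bot \<in> hatP P" "Top \<in> hatP P" "El x \<in> hatP P \<longleftrightarrow> x \<in> P"
  by (auto simp: hatP_def)

lemma bex_hatP_iff: "(\<exists>z\<in>hatP P. Q z) \<longleftrightarrow> Q Bot \<or> Q Top \<or> (\<exists>x\<in>P. Q (El x))"
  by (auto simp: hatP_def)

lemma grid_exists_between:
  assumes "(p, q) \<in> grid a b" "(i, j) \<in> grid a b" "p \<le> i" "q \<le> j"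
    and "(i, j) \<notin> {(p, q), (p + 1, q), (p, q + 1)}"
  shows "\<exists>z\<in>grid a b. pleq (p, q) z \<and> z \<noteq> (p, q) \<and> pleq z (i, j) \<and> z \<noteq> (i, j)"
proof (cases "p < i")
  case True
  show ?thesis
  proof (cases "q < j")
    case True
    then show ?thesis using \<open>p < i\<close> assms by (intro bexI[of _ "(i, q)"]) (auto simp: pleq_def grid_def)
  next
    case False
    then show ?thesis using \<open>p < i\<close> assms by (intro bexI[of _ "(p + 1, q)"]) (auto simp: pleq_def grid_def)
  qed
next
  case False
  then show ?thesis using assms by (intro bexI[of _ "(p, q + 1)"]) (auto simp: pleq_def grid_def)
qed

lemma covers_grid_El_El:
  "covers (grid a b) (El (p, q)) (El (i, j)) \<longleftrightarrow>
     (p, q) \<in> grid a b \<and> (i, j) \<in> grid a b \<and> (i, j) \<in> {(p + 1, q), (p, q + 1)}"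
proof
  assume c: "covers (grid a b) (El (p, q)) (El (i, j))"
  then have "(p, q) \<in> grid a b" "(i, j) \<in> grid a b" "p \<le> i" "q \<le> j" "(p, q) \<noteq> (i, j)"
    and "\<not> (\<exists>z\<in>grid a b. pleq (p, q) z \<and> z \<noteq> (p, q) \<and> pleq z (i, j) \<and> z \<noteq> (i, j))"
    by (auto simp: covers_def bex_hatP_iff pleq_def)
  then show "(p, q) \<in> grid a b \<and> (i, j) \<in> grid a b \<and> (i, j) \<in> {(p + 1, q), (p, q + 1)}"
    using grid_exists_between[of p q a b i j] by blast
next
  assume step: "(p, q) \<in> grid a b \<and> (i, j) \<in> grid a b \<and> (i, j) \<in> {(p + 1, q), (p, q + 1)}"
  have "\<not> (pleq (p, q) w \<and> w \<noteq> (p, q) \<and> pleq w (i, j) \<and> w \<noteq> (i, j))" for w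
    using step by (cases w) (auto simp: pleq_def)
  with step show "covers (grid a b) (El (p, q)) (El (i, j))"
    unfolding covers_def bex_hatP_iff by (auto simp: pleq_def)
qed

lemma covers_grid_Bot_El:
  "covers (grid a b) Bot (El x) \<longleftrightarrow> x \<in> grid a b \<and> x = (1, 1)"
proof -
  have "(\<exists>w\<in>grid a b. pleq w x \<and> w \<noteq> x) \<longleftrightarrow> x \<noteq> (1, 1)" if "x \<in> grid a b"
  proof
    assume "x \<noteq> (1, 1)"
    then show "\<exists>w\<in>grid a b. pleq w x \<and> w \<noteq> x" using that
      by (intro bexI[of _ "(1, 1)"]) (auto simp: grid_def pleq_def)
  qed (use that in \<open>auto simp: grid_def pleq_def\<close>)
  then show ?thesis
    unfolding covers_def bex_hatP_iff by auto
qed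

lemma covers_grid_El_Top:
  "covers (grid a b) (El x) Top \<longleftrightarrow> x \<in> grid a b \<and> x = (a, b)"
proof -
  have "(\<exists>w\<in>grid a b. pleq x w \<and> x \<noteq> w) \<longleftrightarrow> x \<noteq> (a, b)" if "x \<in> grid a b"
  proof
    assume "x \<noteq> (a, b)"
    then show "\<exists>w\<in>grid a b. pleq x w \<and> x \<noteq> w" using that
      by (intro bexI[of _ "(a, b)"]) (auto simp: grid_def pleq_def)
  qed (use that in \<open>auto simp: grid_def pleq_def\<close>)
  then show ?thesis
    unfolding covers_def bex_hatP_iff by auto
qed

lemma not_covers_Top [simp]: "\<not> covers P Top y"
  and not_covers_Bot [simp]: "\<not> covers P y Bot"
  by (auto simp: covers_def)

lemma down_covers_grid:
  assumes "(i, j) \<in> grid a b"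
  shows "down_covers (grid a b) (El (i, j)) =
    (if 2 \<le> i then {El (i - 1, j)} else {}) \<union> (if 2 \<le> j then {El (i, j - 1)} else {})
    \<union> (if i = 1 \<and> j = 1 then {Bot} else {})" (is "?L = ?R")
proof (rule set_eqI)
  fix y
  show "y \<in> ?L \<longleftrightarrow> y \<in> ?R"
  proof (cases y)
    case (El x)
    then show ?thesis using assms
      by (cases x) (simp add: down_covers_def covers_grid_El_El, auto simp: grid_def)
  qed (use assms in \<open>simp_all add: down_covers_def covers_grid_Bot_El\<close>)
qed

lemma up_covers_grid:
  assumes "(i, j) \<in> grid a b"
  shows "up_covers (grid a b) (El (i, j)) =
    (if i < a then {El (i + 1, j)} else {}) \<union> (if j < b then {El (i, j + 1)} else {})
    \<union> (if i = a \<and> j = b then {Top} else {})" (is "?L = ?R")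
proof (rule set_eqI)
  fix y
  show "y \<in> ?L \<longleftrightarrow> y \<in> ?R"
  proof (cases y)
    case (El x)
    then show ?thesis using assms
      by (cases x) (simp add: up_covers_def covers_grid_El_El, auto simp: grid_def)
  qed (use assms in \<open>simp_all add: up_covers_def covers_grid_El_Top\<close>)
qed

definition down_sum :: "nat \<Rightarrow> nat \<Rightarrow> (nat \<times> nat \<Rightarrow> real) \<Rightarrow> nat \<times> nat \<Rightarrow> real" where
  "down_sum a b g x = (\<Sum>y\<in>down_covers (grid a b) (El x). hatf g y)"

definition up_par_sum :: "nat \<Rightarrow> nat \<Rightarrow> (nat \<times> nat \<Rightarrow> real) \<Rightarrow> nat \<times> nat \<Rightarrow> real" where
  "up_par_sum a b g x = par_sum (hatf g) (up_covers (grid a b) (El x))"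

definition toggled :: "nat \<Rightarrow> nat \<Rightarrow> (nat \<times> nat \<Rightarrow> real) \<Rightarrow> nat \<times> nat \<Rightarrow> real" where
  "toggled a b g x = 1 / g x * down_sum a b g x * up_par_sum a b g x"

lemma btoggle_grid: "btoggle (grid a b) x g = g(x := toggled a b g x)"
  by (simp add: btoggle_def toggled_def down_sum_def up_par_sum_def)

lemma down_sum_grid:
  assumes "(i, j) \<in> grid a b"
  shows "down_sum a b g (i, j) = (if 2 \<le> i then g (i - 1, j) else 0) + (if 2 \<le> j then g (i, j - 1) else 0)
     + (if i = 1 \<and> j = 1 then 1 else 0)"
  using assms unfolding down_sum_def down_covers_grid[OF assms]
  by (cases "2 \<le> i"; cases "2 \<le> j") (auto simp: grid_def)

lemma up_par_sum_grid:
  assumes "(i, j) \<in> grid a b"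
  shows "up_par_sum a b g (i, j) = 1 / ((if i < a then 1 / g (i + 1, j) else 0)
     + (if j < b then 1 / g (i, j + 1) else 0) + (if i = a \<and> j = b then 1 else 0))"
  using assms unfolding up_par_sum_def par_sum_def up_covers_grid[OF assms]
  by (cases "i < a"; cases "j < b") (auto simp: grid_def)

lemma toggled_pos:
  assumes "x \<in> grid a b" and pos: "\<forall>y\<in>grid a b. g y > 0"
  shows "toggled a b g x > 0"
proof -
  obtain i j where x: "x = (i, j)" by (cases x)
  have g: "(i, j) \<in> grid a b" using assms x by simp
  have "2 \<le> i \<Longrightarrow> g (i - 1, j) > 0" "2 \<le> j \<Longrightarrow> g (i, j - 1) > 0"
    "i < a \<Longrightarrow> g (i + 1, j) > 0" "j < b \<Longrightarrow> g (i, j + 1) > 0"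
    using g by (auto simp: grid_def intro!: pos[rule_format])
  with g have "down_sum a b g (i, j) > 0" "up_par_sum a b g (i, j) > 0"
    by (auto simp: down_sum_grid up_par_sum_grid grid_def add_pos_nonneg add_nonneg_pos)
  with g pos show ?thesis by (simp add: toggled_def x)
qed

lemma gfile_subset_grid: "gfile a b k \<subseteq> grid a b"
  by (auto simp: gfile_def)

lemma gfile_disjoint: "x \<in> gfile a b k \<Longrightarrow> x \<in> gfile a b m \<Longrightarrow> k = m"
  by (auto simp: gfile_def)

text \<open>All neighbours of an element of file \<open>k\<close> lie in the files \<open>k - 1\<close> and \<open>k + 1\<close>.\<close>

lemma toggled_cong_off_file:
  assumes x: "x \<in> gfile a b k" and "h x = g x"
    and off: "\<forall>y\<in>grid a b. y \<notin> gfile a b k \<longrightarrow> h y = g y"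
  shows "toggled a b h x = toggled a b g x"
proof -
  obtain i j where ij: "x = (i, j)" by (cases x)
  have g: "(i, j) \<in> grid a b" and k: "int j - int i + int a = int k"
    using x ij by (auto simp: gfile_def)
  have off': "h (p, q) = g (p, q)" if "(p, q) \<in> grid a b" "int q - int p + int a \<noteq> int k" for p q
    using off that by (auto simp: gfile_def)
  have "2 \<le> i \<Longrightarrow> h (i - 1, j) = g (i - 1, j)" "2 \<le> j \<Longrightarrow> h (i, j - 1) = g (i, j - 1)"
    "i < a \<Longrightarrow> h (i + 1, j) = g (i + 1, j)" "j < b \<Longrightarrow> h (i, j + 1) = g (i, j + 1)"
    using g k by (auto simp: grid_def of_nat_diff intro!: off')
  with \<open>h x = g x\<close> show ?thesis
    unfolding ij toggled_def down_sum_grid[OF g] up_par_sum_grid[OF g] by auto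
qed

lemma fold_btoggle_file:
  assumes "distinct rs" "\<forall>i\<in>set rs. (i, c i) \<in> gfile a b k"
  shows "fold (\<lambda>i. btoggle (grid a b) (i, c i)) rs g
     = (\<lambda>x. if x \<in> (\<lambda>i. (i, c i)) ` set rs then toggled a b g x else g x)"
  using assms
proof (induction rs arbitrary: g)
  case Nil
  then show ?case by simp
next
  case (Cons r rs)
  define g' where "g' = g((r, c r) := toggled a b g (r, c r))"
  have off: "\<forall>y\<in>grid a b. y \<notin> gfile a b k \<longrightarrow> g' y = g y"
    using Cons.prems by (auto simp: g'_def)
  have "toggled a b g' x = toggled a b g x" if "x \<in> (\<lambda>i. (i, c i)) ` set rs" for x
    using that Cons.prems by (intro toggled_cong_off_file[OF _ _ off]) (auto simp: g'_def)
  moreover have "fold (\<lambda>i. btoggle (grid a b) (i, c i)) (r # rs) g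
      = fold (\<lambda>i. btoggle (grid a b) (i, c i)) rs g'"
    by (simp add: btoggle_grid g'_def)
  moreover have "\<dots> = (\<lambda>x. if x \<in> (\<lambda>i. (i, c i)) ` set rs then toggled a b g' x else g' x)"
    using Cons.prems by (intro Cons.IH) auto
  ultimately show ?case
    by (auto simp: g'_def)
qed

lemma toggle_file_eq:
  "toggle_file a b k g = (\<lambda>x. if x \<in> gfile a b k then toggled a b g x else g x)"
proof -
  let ?c = "\<lambda>i. nat (int k + int i - int a)"
  let ?rs = "filter (\<lambda>i. (i, ?c i) \<in> gfile a b k) [1..<a + 1]"
  have "x \<in> (\<lambda>i. (i, ?c i)) ` set ?rs" if "x \<in> gfile a b k" for x
  proof -
    obtain i j where ij: "x = (i, j)" by (cases x)
    with that have "j = ?c i" "i \<in> set [1..<a + 1]"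
      by (auto simp: gfile_def grid_def)
    with that ij show ?thesis by auto
  qed
  then have "(\<lambda>i. (i, ?c i)) ` set ?rs = gfile a b k" by auto
  moreover have "fold (\<lambda>i. btoggle (grid a b) (i, ?c i)) ?rs g
     = (\<lambda>x. if x \<in> (\<lambda>i. (i, ?c i)) ` set ?rs then toggled a b g x else g x)"
    by (rule fold_btoggle_file) auto
  ultimately show ?thesis by (simp add: toggle_file_def)
qed

definition grid_ext :: "nat \<Rightarrow> nat \<Rightarrow> (nat \<times> nat \<Rightarrow> real) \<Rightarrow> nat \<times> nat \<Rightarrow> real" where
  "grid_ext a b g y = (if y \<in> grid a b then g y else 1)"

lemma down_sum_border:
  assumes "(i, j) \<in> grid a b" "i = 1 \<or> j = 1"
  shows "down_sum a b g (i, j) = grid_ext a b g (i, j - 1) * grid_ext a b g (i - 1, j)"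
  using assms by (auto simp: down_sum_grid grid_ext_def grid_def)

lemma up_par_sum_border:
  assumes "(i, j) \<in> grid a b" "i = a \<or> j = b"
  shows "up_par_sum a b g (i, j) = grid_ext a b g (i + 1, j) * grid_ext a b g (i, j + 1)"
  using assms by (auto simp: up_par_sum_grid grid_ext_def grid_def)

lemma down_sum_mul_up_par_sum:
  assumes "(i, j) \<in> grid a b" "(i + 1, j + 1) \<in> grid a b" "\<forall>x\<in>grid a b. g x > 0"
  shows "down_sum a b g (i + 1, j + 1) * up_par_sum a b g (i, j)
    = grid_ext a b g (i + 1, j) * grid_ext a b g (i, j + 1)"
proof -
  have "(i + 1, j) \<in> grid a b" "(i, j + 1) \<in> grid a b"
    using assms by (auto simp: grid_def)
  moreover from this have "g (i + 1, j) > 0" "g (i, j + 1) > 0"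
    using assms(3) by blast+
  ultimately show ?thesis
    using assms(1,2) by (simp add: down_sum_grid up_par_sum_grid grid_ext_def grid_def field_simps)
qed

lemma prod_gfile_rows:
  assumes "finite S" "\<forall>i\<in>S. a \<le> m + i" "\<forall>x\<in>gfile a b m. fst x \<in> S"
  shows "(\<Prod>x\<in>gfile a b m. g x) = (\<Prod>i\<in>S. grid_ext a b g (i, m + i - a))"
proof -
  let ?T = "{i \<in> S. (i, m + i - a) \<in> grid a b}"
  have "(\<Prod>i\<in>S. grid_ext a b g (i, m + i - a)) = (\<Prod>i\<in>?T. g (i, m + i - a))"
    unfolding grid_ext_def using assms(1) by (simp add: prod.If_cases Int_def)
  also have "\<dots> = (\<Prod>x\<in>(\<lambda>i. (i, m + i - a)) ` ?T. g x)"
    by (rule prod.reindex_cong[symmetric, where l = "\<lambda>i. (i, m + i - a)"]) (auto simp: inj_on_def)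
  also have "(\<lambda>i. (i, m + i - a)) ` ?T = gfile a b m"
  proof
    show "(\<lambda>i. (i, m + i - a)) ` ?T \<subseteq> gfile a b m"
      using assms(2) by (auto simp: gfile_def)
    show "gfile a b m \<subseteq> (\<lambda>i. (i, m + i - a)) ` ?T"
    proof
      fix x assume x: "x \<in> gfile a b m"
      obtain i j where ij: "x = (i, j)" by (cases x)
      have "j = m + i - a" "i \<in> S" "x \<in> grid a b"
        using x ij assms(3) gfile_subset_grid by (auto simp: gfile_def)
      with ij show "x \<in> (\<lambda>i. (i, m + i - a)) ` ?T" by blast
    qed
  qed
  finally show ?thesis by simp
qed

lemma prod_telescope:
  fixes D U L R :: "nat \<Rightarrow> real"
  assumes "D (Suc l) = L (Suc l) * R l"
    and "\<forall>i. Suc l \<le> i \<longrightarrow> i < Suc l + d \<longrightarrow> D (Suc i) * U i = L (Suc i) * R i"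
  shows "(\<Prod>i\<in>{Suc l..Suc l + d}. D i * U i)
       = (\<Prod>i\<in>{Suc l..Suc l + d}. L i) * (\<Prod>i\<in>{l..l + d}. R i) * U (Suc l + d)"
  using assms(2)
proof (induction d)
  case 0
  then show ?case using assms(1) by simp
next
  case (Suc d)
  let ?n = "Suc l + d"
  have step: "D (Suc ?n) * U ?n = L (Suc ?n) * R ?n"
    using Suc.prems by simp
  have "(\<Prod>i\<in>{Suc l..Suc ?n}. D i * U i) = (\<Prod>i\<in>{Suc l..?n}. D i * U i) * (D (Suc ?n) * U (Suc ?n))"
    by simp
  also have "\<dots> = (\<Prod>i\<in>{Suc l..?n}. L i) * (\<Prod>i\<in>{l..l + d}. R i) * U ?n * (D (Suc ?n) * U (Suc ?n))"
    using Suc.IH Suc.prems by simp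
  also have "\<dots> = (\<Prod>i\<in>{Suc l..?n}. L i) * (\<Prod>i\<in>{l..l + d}. R i) * (D (Suc ?n) * U ?n) * U (Suc ?n)"
    by (simp only: ac_simps)
  also have "\<dots> = (\<Prod>i\<in>{Suc l..Suc ?n}. L i) * (\<Prod>i\<in>{l..l + Suc d}. R i) * U (Suc ?n)"
    unfolding step by simp
  finally show ?case by simp
qed

lemma pfile_eq_prod: "pfile a b g m = (\<Prod>x\<in>gfile a b m. g x)"
proof -
  have "gfile a b 0 = {}" "gfile a b (a + b) = {}"
    by (auto simp: gfile_def grid_def)
  then show ?thesis by (auto simp: pfile_def)
qed

lemma prod_gfile_down_sum_up_par_sum:
  assumes ab: "1 \<le> a" "1 \<le> b" and k: "1 \<le> k" "k < a + b" and pos: "\<forall>x\<in>grid a b. g x > 0"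
  shows "(\<Prod>x\<in>gfile a b k. down_sum a b g x * up_par_sum a b g x) = pfile a b g (k - 1) * pfile a b g (k + 1)"
proof -
  \<comment> \<open>File \<open>k\<close> occupies the rows \<open>Suc l, \<dots>, hi\<close> (\<open>a - k\<close> truncates to \<open>0\<close> when \<open>a \<le> k\<close>);
    \<open>L\<close> and \<open>R\<close> run along files \<open>k - 1\<close> and \<open>k + 1\<close>, extended by \<open>1\<close> outside the grid.\<close>
  define l where "l = a - k"
  define hi where "hi = min a (a + b - k)"
  define d where "d = hi - Suc l"
  define D where "D i = down_sum a b g (i, k + i - a)" for i
  define U where "U i = up_par_sum a b g (i, k + i - a)" for i
  define L where "L i = grid_ext a b g (i, (k - 1) + i - a)" for i
  define R where "R i = grid_ext a b g (i, (k + 1) + i - a)" for i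
  have hi: "hi = Suc l + d" using ab k by (auto simp: l_def hi_def d_def)
  have row: "(i, k + i - a) \<in> grid a b" if "Suc l \<le> i" "i \<le> hi" for i
    using that ab k by (auto simp: l_def hi_def grid_def)
  have first: "D (Suc l) = L (Suc l) * R l"
    using row[of "Suc l"] hi k unfolding D_def L_def R_def
    by (subst down_sum_border) (auto simp: l_def)
  have step: "\<forall>i. Suc l \<le> i \<longrightarrow> i < Suc l + d \<longrightarrow> D (Suc i) * U i = L (Suc i) * R i"
  proof (intro allI impI)
    fix i assume i: "Suc l \<le> i" "i < Suc l + d"
    define j where "j = k + i - a"
    have "a < k + i" using i by (simp add: l_def)
    then have "(i, j) \<in> grid a b" "(i + 1, j + 1) \<in> grid a b"
      using row[of i] row[of "Suc i"] i hi by (auto simp: j_def Suc_diff_le)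
    moreover have "k + Suc i - a = j + 1" "k - 1 + Suc i - a = j" "k + 1 + i - a = j + 1" "k + i - a = j"
      using \<open>a < k + i\<close> k by (auto simp: j_def)
    ultimately show "D (Suc i) * U i = L (Suc i) * R i"
      using down_sum_mul_up_par_sum[OF _ _ pos] unfolding D_def U_def L_def R_def
      by (simp only:) simp
  qed
  have last: "U hi = L (Suc hi) * R hi"
  proof -
    have "Suc l \<le> hi" using hi by simp
    then have "a < k + hi" "(hi, k + hi - a) \<in> grid a b" "hi = a \<or> k + hi - a = b"
      using row[OF _ order_refl] k by (auto simp: hi_def l_def)
    then show ?thesis
      using k unfolding U_def L_def R_def
      by (subst up_par_sum_border) (simp_all add: Suc_diff_le)
  qed
  have "(\<Prod>x\<in>gfile a b k. down_sum a b g x * up_par_sum a b g x)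
      = (\<Prod>i\<in>{Suc l..hi}. grid_ext a b (\<lambda>x. down_sum a b g x * up_par_sum a b g x) (i, k + i - a))"
    by (rule prod_gfile_rows) (auto simp: l_def hi_def gfile_def grid_def)
  also have "\<dots> = (\<Prod>i\<in>{Suc l..hi}. D i * U i)"
    by (rule prod.cong) (auto simp: grid_ext_def D_def U_def row)
  also have "\<dots> = (\<Prod>i\<in>{Suc l..Suc hi}. L i) * (\<Prod>i\<in>{l..hi}. R i)"
    using prod_telescope[of D l L R d U, OF first step] hi last by (simp add: ac_simps)
  also have "\<dots> = pfile a b g (k - 1) * pfile a b g (k + 1)"
    unfolding pfile_eq_prod L_def R_def using k
    by (intro arg_cong2[where f = "(*)"] prod_gfile_rows[symmetric])
      (auto simp: l_def hi_def gfile_def grid_def)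
  finally show ?thesis .
qed

lemma pfile_pos: "\<forall>x\<in>grid a b. g x > 0 \<Longrightarrow> pfile a b g m > 0"
  unfolding pfile_eq_prod using gfile_subset_grid by (intro prod_pos) blast

lemma toggle_file_pos: "\<forall>x\<in>grid a b. g x > 0 \<Longrightarrow> \<forall>x\<in>grid a b. toggle_file a b k g x > 0"
  by (simp add: toggle_file_eq toggled_pos)

lemma toggle_file_other_file: "x \<notin> gfile a b k \<Longrightarrow> toggle_file a b k g x = g x"
  by (simp add: toggle_file_eq)

lemma pfile_toggle_file_other: "m \<noteq> k \<Longrightarrow> pfile a b (toggle_file a b k g) m = pfile a b g m"
  unfolding pfile_eq_prod using gfile_disjoint
  by (intro prod.cong refl toggle_file_other_file) blast

lemma pfile_toggle_file:
  assumes "1 \<le> a" "1 \<le> b" "1 \<le> k" "k < a + b" "\<forall>x\<in>grid a b. g x > 0"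
  shows "pfile a b (toggle_file a b k g) k = pfile a b g (k - 1) * pfile a b g (k + 1) / pfile a b g k"
proof -
  have "pfile a b (toggle_file a b k g) k = (\<Prod>x\<in>gfile a b k. down_sum a b g x * up_par_sum a b g x / g x)"
    by (simp add: pfile_eq_prod toggle_file_eq toggled_def)
  also have "\<dots> = (\<Prod>x\<in>gfile a b k. down_sum a b g x * up_par_sum a b g x) / pfile a b g k"
    by (simp add: prod_dividef pfile_eq_prod)
  finally show ?thesis
    using prod_gfile_down_sum_up_par_sum[OF assms] by simp
qed

definition partial_bpro :: "nat \<Rightarrow> nat \<Rightarrow> nat \<Rightarrow> (nat \<times> nat \<Rightarrow> real) \<Rightarrow> nat \<times> nat \<Rightarrow> real" where
  "partial_bpro a b k f = fold (toggle_file a b) [1..<k + 1] f"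

lemma partial_bpro_0 [simp]: "partial_bpro a b 0 f = f"
  and partial_bpro_Suc [simp]: "partial_bpro a b (Suc k) f = toggle_file a b (Suc k) (partial_bpro a b k f)"
  by (simp_all add: partial_bpro_def)

lemma bpro_eq_partial_bpro: "0 < a + b \<Longrightarrow> bpro a b f = partial_bpro a b (a + b - 1) f"
  by (simp add: bpro_def partial_bpro_def del: upt_Suc)

lemma partial_bpro_pos: "\<forall>x\<in>grid a b. f x > 0 \<Longrightarrow> \<forall>x\<in>grid a b. partial_bpro a b k f x > 0"
  by (induction k) (simp_all add: toggle_file_pos)

lemma pfile_partial_bpro_later: "k < m \<Longrightarrow> pfile a b (partial_bpro a b k f) m = pfile a b f m"
  by (induction k) (simp_all add: pfile_toggle_file_other)

lemma pfile_partial_bpro_earlier: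
  "m \<le> k \<Longrightarrow> pfile a b (partial_bpro a b k f) m = pfile a b (partial_bpro a b m f) m"
  by (induction k rule: dec_induct) (simp_all add: pfile_toggle_file_other)

lemma pfile_partial_bpro:
  assumes ab: "1 \<le> a" "1 \<le> b" and pos: "\<forall>x\<in>grid a b. f x > 0"
  shows "k < a + b \<Longrightarrow> pfile a b (partial_bpro a b k f) k = pfile a b f (k + 1) / pfile a b f 1"
proof (induction k)
  case 0
  then show ?case using pfile_pos[OF pos, of 1] by (simp add: pfile_def)
next
  case (Suc k)
  let ?p = "pfile a b f"
  have "pfile a b (partial_bpro a b (Suc k) f) (Suc k)
      = (?p (k + 1) / ?p 1) * ?p (k + 2) / ?p (Suc k)"
    using Suc pfile_toggle_file[OF ab _ _ partial_bpro_pos[OF pos], of "Suc k" k]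
    by (simp add: pfile_partial_bpro_later)
  also have "\<dots> = ?p (Suc k + 1) / ?p 1"
    using pfile_pos[OF pos, of "Suc k"] by (simp add: field_simps)
  finally show ?case .
qed

lemma pfile_bpro:
  assumes "1 \<le> a" "1 \<le> b" "\<forall>x\<in>grid a b. f x > 0" "m < a + b"
  shows "pfile a b (bpro a b f) m = pfile a b f (m + 1) / pfile a b f 1"
  using assms pfile_partial_bpro_earlier[of m "a + b - 1"] pfile_partial_bpro[OF assms(1-3), of m]
  by (simp add: bpro_eq_partial_bpro)

lemma map_upt_rotate:
  assumes "0 < n" "\<And>m. 1 \<le> m \<Longrightarrow> m < n \<Longrightarrow> h m = g (Suc m)" "h n = g 1"
  shows "map h [1..<n + 1] = tl (map g [1..<n + 1]) @ [hd (map g [1..<n + 1])]"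
proof -
  have "[1..<n + 1] = 1 # map Suc [1..<n]"
    using assms(1) by (simp add: upt_conv_Cons map_Suc_upt del: upt_Suc)
  then have "map g [1..<n + 1] = g 1 # map (g \<circ> Suc) [1..<n]"
    by simp
  moreover have "map h [1..<n] = map (g \<circ> Suc) [1..<n]"
    using assms(2) by simp
  ultimately show ?thesis
    using assms(1,3) by simp
qed

theorem corollary7:
  fixes a b :: nat and f :: "nat \<times> nat \<Rightarrow> real"
  assumes "a \<ge> 1" and "b \<ge> 1"
    and "\<forall>x \<in> grid a b. f x > 0"
  shows "Qvec a b (bpro a b f) = tl (Qvec a b f) @ [hd (Qvec a b f)]"
proof -
  let ?p = "pfile a b f"
  have p_pos: "?p m > 0" for m
    using pfile_pos[OF assms(3)] .
  have shift: "qfile a b (bpro a b f) m = qfile a b f (Suc m)" if "1 \<le> m" "m < a + b" for m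
    using that p_pos[of 1] p_pos[of m]
    by (simp add: qfile_def pfile_bpro[OF assms] field_simps)
  have "pfile a b (bpro a b f) (a + b - 1) = ?p (a + b) / ?p 1"
    using pfile_bpro[OF assms, of "a + b - 1"] assms(1) by simp
  then have wrap: "qfile a b (bpro a b f) (a + b) = qfile a b f 1"
    using p_pos[of 1] by (simp add: qfile_def pfile_def)
  show ?thesis
    unfolding Qvec_def using assms(1) shift wrap by (intro map_upt_rotate) auto
qed

end
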